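(* Let $0<\alpha<1$, $\lambda>0$, $C=\frac1\alpha-1$ and $W_{+}(s)=\frac{1}{C}\,\lambda\frac{\sin(\alpha\pi)}{\pi}\frac{s^{\alpha-1}}{s^{2\alpha}-2\lambda s^{\alpha}\cos(\alpha\pi)+\lambda^{2}}$ for $s>0$. Let $u_1,u_2$ be independent random variables uniformly distributed on $(0,1)$, put $v=Cu_1$ and $$\tau=-\Big(\frac1\lambda\Big)^{1/\alpha}\left(\frac{\sin(\alpha\pi(1+2v))-\sin(\alpha\pi)}{\sin(2\alpha\pi(1+v))}\right)^{1/\alpha}\log(u_2).$$ Then $\tau$ is a positive random variable whose survival function is $$\mathbb{P}(\tau>t)=\phi_{W_+}(t):=\int_0^\infty W_{+}(s)\,e^{-st}\,\mathrm{d}s\qquad (t\ge 0).$$ *)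

theory Defs
  imports "HOL-Probability.Probability"
begin

definition C_const :: "real \<Rightarrow> real" where
  "C_const a = 1 / a - 1"

definition W_plus :: "real \<Rightarrow> real \<Rightarrow> real \<Rightarrow> real" where
  "W_plus a lam s =
     (1 / C_const a) * lam * (sin (a * pi) / pi) *
     (s powr (a - 1) / (s powr (2 * a) - 2 * lam * s powr a * cos (a * pi) + lam ^ 2))"

definition tau_fun :: "real \<Rightarrow> real \<Rightarrow> real \<Rightarrow> real \<Rightarrow> real" where
  "tau_fun a lam x1 x2 =
     (let v = C_const a * x1 in
      - ((1 / lam) powr (1 / a)) *
        ((sin (a * pi * (1 + 2 * v)) - sin (a * pi)) / sin (2 * a * pi * (1 + v))) powr (1 / a) *
        ln x2)"

end

theory Submission
  imports Defs
begin

text \<open>Conditionally on u1, tau = - K(u1) ln u2 is exponentially distributed with mean K(u1), so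
  P(tau > t) is the integral of exp(- t / K(x)) over 0 < x < 1. Writing
  theta = a pi + pi (1 - a) x, the trigonometric quotient in tau is
  sin(theta - a pi) / sin theta, hence 1 / K(x) = Q(1 - x) with
  Q(y) = (lam sin(pi (1 - a) y) / sin(pi (1 - a) y + a pi))^(1/a).
  Q increases from 0 to infinity on (0, 1) and Q' = 1 / W_+(Q), i.e. Q is the quantile function
  of the density W_+; so after reflecting x to 1 - x, the substitution s = Q(y) turns the integral
  into the Laplace transform of W_+. The identity behind Q' = 1 / W_+(Q) is
  sin^2 p - 2 sin p sin(p + c) cos c + sin^2(p + c) = sin^2 c.\<close>

lemma sin_sq_add_law_of_cosines:
  fixes p c :: real
  shows "(sin p)\<^sup>2 - 2 * sin p * sin (p + c) * cos c + (sin (p + c))\<^sup>2 = (sin c)\<^sup>2"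
proof -
  have "sin p = sin (p + c) * cos c - cos (p + c) * sin c"
    using sin_diff[of "p + c" c] by simp
  then show ?thesis
    using sin_cos_squared_add[of c] sin_cos_squared_add[of "p + c"]
    by (simp only: power2_eq_square) algebra
qed

lemma sq_sub_cos_add_sq_pos:
  fixes x lam c :: real
  assumes "lam \<noteq> 0" and "sin c \<noteq> 0"
  shows "0 < x\<^sup>2 - 2 * lam * x * cos c + lam\<^sup>2"
proof -
  have "x\<^sup>2 - 2 * lam * x * cos c + lam\<^sup>2 = (x - lam * cos c)\<^sup>2 + lam\<^sup>2 * (sin c)\<^sup>2"
    using sin_cos_squared_add[of c] by (simp only: power2_eq_square) algebra
  also have "\<dots> > 0"
    using assms by (intro add_nonneg_pos) auto
  finally show ?thesis .
qed

lemma set_integral_reflect_unit_interval: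
  fixes h :: "real \<Rightarrow> real"
  shows "(LBINT x:{0<..<1}. h (1 - x)) = (LBINT y:{0<..<1}. h y)"
proof -
  have "(LBINT y:{0<..<1}. h y) = (\<integral>y. indicator {0<..<1::real} y * h y \<partial>lborel)"
    by (simp add: set_lebesgue_integral_def)
  also have "\<dots> = \<bar>-1\<bar> *\<^sub>R (\<integral>x. indicator {0<..<1::real} (1 + (-1) * x) * h (1 + (-1) * x) \<partial>lborel)"
    by (rule lborel_integral_real_affine) simp
  also have "\<dots> = (\<integral>x. indicator {0<..<1::real} x * h (1 - x) \<partial>lborel)"
    by (simp, intro Bochner_Integration.integral_cong refl) (auto simp: indicator_def)
  also have "\<dots> = (LBINT x:{0<..<1}. h (1 - x))"
    by (simp add: set_lebesgue_integral_def)
  finally show ?thesis ..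
qed

lemma AE_distributedD:
  assumes "distributed M N X f" and "AE y in N. 0 < f y \<longrightarrow> P y"
  shows "AE x in M. P (X x)"
proof (rule AE_distrD[OF distributed_measurable[OF assms(1)]])
  show "AE y in distr M N X. P y"
    unfolding distributed_distr_eq_density[OF assms(1)]
      AE_density[OF distributed_borel_measurable[OF assms(1)]]
    by (rule assms(2))
qed

lemma indep_var_lborelI:
  fixes u1 u2 :: "'m \<Rightarrow> real"
  assumes "prob_space M" and "prob_space.indep_var M borel u1 borel u2"
  shows "prob_space.indep_var M lborel u1 lborel u2"
proof -
  interpret prob_space M by fact
  have "(case_bool lborel lborel :: bool \<Rightarrow> real measure) = (\<lambda>_. lborel)"
    and "(case_bool borel borel :: bool \<Rightarrow> real measure) = (\<lambda>_. borel)"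
    by (auto simp: fun_eq_iff split: bool.split)
  then show ?thesis
    using assms(2) unfolding indep_var_def indep_vars_def by (simp add: measurable_lborel1)
qed

lemma measure_indep_uniform_pair:
  fixes M :: "'m measure" and u1 u2 :: "'m \<Rightarrow> real"
  assumes "prob_space M"
    and "distributed M lborel u1 (\<lambda>x. indicator {0<..<1} x)"
    and "distributed M lborel u2 (\<lambda>x. indicator {0<..<1} x)"
    and "prob_space.indep_var M borel u1 borel u2"
    and T: "T \<in> sets (lborel \<Otimes>\<^sub>M lborel)"
  shows "measure M {x \<in> space M. (u1 x, u2 x) \<in> T}
    = enn2real (\<integral>\<^sup>+x1. indicator {0<..<1} x1 * emeasure lborel {x2 \<in> {0<..<1}. (x1, x2) \<in> T} \<partial>lborel)"
proof -
  interpret prob_space M by fact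
  let ?F = "\<lambda>(x::real, y::real). (indicator {0<..<1} x * indicator {0<..<1} y :: ennreal)"
  have J: "distributed M (lborel \<Otimes>\<^sub>M lborel) (\<lambda>x. (u1 x, u2 x)) ?F"
    using assms(1-4) indep_var_lborelI
    by (intro distributed_joint_indep lborel.sigma_finite_measure_axioms)
  have F: "?F \<in> borel_measurable (lborel \<Otimes>\<^sub>M lborel)"
    by (rule distributed_borel_measurable[OF J])
  have "measure M {x \<in> space M. (u1 x, u2 x) \<in> T}
      = measure (distr M (lborel \<Otimes>\<^sub>M lborel) (\<lambda>x. (u1 x, u2 x))) T"
    using measure_distr[OF distributed_measurable[OF J] T] by (simp add: vimage_def Int_def conj_commute)
  also have "\<dots> = enn2real (\<integral>\<^sup>+p. ?F p * indicator T p \<partial>(lborel \<Otimes>\<^sub>M lborel))"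
    unfolding distributed_distr_eq_density[OF J] measure_def by (simp add: emeasure_density[OF F T])
  also have "(\<integral>\<^sup>+p. ?F p * indicator T p \<partial>(lborel \<Otimes>\<^sub>M lborel))
      = (\<integral>\<^sup>+x1. \<integral>\<^sup>+x2. ?F (x1, x2) * indicator T (x1, x2) \<partial>lborel \<partial>lborel)"
    by (rule lborel.nn_integral_fst[symmetric]) (use F T in measurable)
  also have "\<dots> = (\<integral>\<^sup>+x1. indicator {0<..<1} x1 * emeasure lborel {x2 \<in> {0<..<1}. (x1, x2) \<in> T} \<partial>lborel)"
  proof (rule nn_integral_cong)
    fix x1 :: real
    let ?S = "{x2 \<in> {0<..<1}. (x1, x2) \<in> T}"
    have S: "?S \<in> sets lborel"
    proof -
      have "?S = {0<..<1} \<inter> Pair x1 -` T" by auto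
      then show ?thesis using sets_Pair1[OF T] by simp
    qed
    have "(\<integral>\<^sup>+x2. ?F (x1, x2) * indicator T (x1, x2) \<partial>lborel)
        = (\<integral>\<^sup>+x2. indicator {0<..<1} x1 * indicator ?S x2 \<partial>lborel)"
      by (intro nn_integral_cong) (auto simp: indicator_def)
    also have "\<dots> = indicator {0<..<1} x1 * emeasure lborel ?S"
      using S by (simp add: nn_integral_cmult)
    finally show "(\<integral>\<^sup>+x2. ?F (x1, x2) * indicator T (x1, x2) \<partial>lborel)
        = indicator {0<..<1} x1 * emeasure lborel ?S" .
  qed
  finally show ?thesis .
qed

lemma emeasure_neg_ln_scaled_gt:
  fixes K t :: real
  assumes "0 \<le> K" and "0 \<le> t"
  shows "emeasure lborel {x \<in> {0<..<1}. t < - (K * ln x)}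
    = ennreal (if 0 < K then exp (- t / K) else 0)"
proof (cases "0 < K")
  case True
  have "{x \<in> {0<..<1}. t < - (K * ln x)} = {0<..<exp (- t / K)}"
  proof (intro set_eqI iffI)
    fix x assume "x \<in> {x \<in> {0<..<1}. t < - (K * ln x)}"
    then have "0 < x" and "ln x < - t / K"
      using True by (auto simp: field_simps)
    then show "x \<in> {0<..<exp (- t / K)}"
      by (metis exp_less_cancel_iff exp_ln greaterThanLessThan_iff)
  next
    fix x assume "x \<in> {0<..<exp (- t / K)}"
    then have x: "0 < x" "x < exp (- t / K)" by auto
    then have "ln x < - t / K"
      by (metis ln_exp ln_less_cancel_iff exp_gt_zero)
    moreover have "exp (- t / K) \<le> 1"
      using True assms by simp
    then have "x < 1"
      using x(2) by linarith
    ultimately show "x \<in> {x \<in> {0<..<1}. t < - (K * ln x)}"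
      using x True by (auto simp: field_simps)
  qed
  then show ?thesis
    using True by simp
next
  case False
  then show ?thesis
    using assms by simp
qed

lemma measure_neg_ln_scaled_gt:
  fixes M :: "'m measure" and u1 u2 :: "'m \<Rightarrow> real" and K :: "real \<Rightarrow> real"
  assumes "prob_space M"
    and "distributed M lborel u1 (\<lambda>x. indicator {0<..<1} x)"
    and "distributed M lborel u2 (\<lambda>x. indicator {0<..<1} x)"
    and "prob_space.indep_var M borel u1 borel u2"
    and K_meas: "K \<in> borel_measurable borel" and K_nonneg: "\<And>x. 0 \<le> K x"
    and "0 \<le> t"
  shows "measure M {x \<in> space M. t < - (K (u1 x) * ln (u2 x))}
    = (LBINT x:{0<..<1}. if 0 < K x then exp (- t / K x) else 0)"
proof -
  note [measurable] = K_meas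
  define G where "G x = (if 0 < K x then exp (- t / K x) else 0)" for x
  have G_meas: "G \<in> borel_measurable lborel"
    unfolding G_def by measurable
  have T: "{p. t < - (K (fst p) * ln (snd p))} \<in> sets (lborel \<Otimes>\<^sub>M lborel)"
  proof -
    have "{p \<in> space (lborel \<Otimes>\<^sub>M lborel). t < - (K (fst p) * ln (snd p))} \<in> sets (lborel \<Otimes>\<^sub>M lborel)"
      by measurable
    then show ?thesis by (simp add: space_pair_measure)
  qed
  have "measure M {x \<in> space M. t < - (K (u1 x) * ln (u2 x))}
      = enn2real (\<integral>\<^sup>+x1. indicator {0<..<1} x1
          * emeasure lborel {x2 \<in> {0<..<1}. t < - (K x1 * ln x2)} \<partial>lborel)"
    using measure_indep_uniform_pair[OF assms(1-4) T] by simp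
  also have "\<dots> = enn2real (\<integral>\<^sup>+x1. ennreal (indicator {0<..<1} x1 * G x1) \<partial>lborel)"
    using emeasure_neg_ln_scaled_gt[OF K_nonneg \<open>0 \<le> t\<close>]
    by (intro arg_cong[where f = enn2real] nn_integral_cong) (simp add: G_def indicator_def)
  also have "\<dots> = (LBINT x:{0<..<1}. G x)"
    unfolding set_lebesgue_integral_def using G_meas
    by (subst integral_eq_nn_integral) (auto simp: G_def)
  finally show ?thesis
    by (simp add: G_def)
qed

lemma unit_interval_angle_bounds:
  fixes a y :: real
  assumes "0 < a" "a < 1" "0 < y" "y < 1"
  shows "0 < pi * (1 - a) * y" and "pi * (1 - a) * y < pi"
    and "0 < pi * (1 - a) * y + a * pi" and "pi * (1 - a) * y + a * pi < pi"
proof -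
  have "pi * (1 - a) * y < pi * (1 - a)"
    using assms by simp
  moreover have "pi * (1 - a) + a * pi = pi"
    by (simp add: algebra_simps)
  moreover have "0 < pi * (1 - a) * y" and "0 < a * pi"
    using assms by simp_all
  ultimately show "0 < pi * (1 - a) * y" and "pi * (1 - a) * y < pi"
    and "0 < pi * (1 - a) * y + a * pi" and "pi * (1 - a) * y + a * pi < pi"
    by linarith+
qed

lemma unit_interval_angle_sin_pos:
  fixes a y :: real
  assumes "0 < a" "a < 1" "0 < y" "y < 1"
  shows "0 < sin (pi * (1 - a) * y)" and "0 < sin (pi * (1 - a) * y + a * pi)"
  using unit_interval_angle_bounds[OF assms] by (simp_all add: sin_gt_zero)

lemma AE_cos_angle_ne_zero:
  fixes a :: real
  assumes "0 < a" "a < 1"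
  shows "AE x in lborel. 0 < x \<longrightarrow> x < 1 \<longrightarrow> cos (pi * (1 - a) * x + a * pi) \<noteq> 0"
  using AE_lborel_singleton[of "(pi / 2 - a * pi) / (pi * (1 - a))"]
proof eventually_elim
  case (elim x)
  show ?case
  proof (intro impI notI)
    assume x: "0 < x" "x < 1" and "cos (pi * (1 - a) * x + a * pi) = 0"
    then have "cos (pi * (1 - a) * x + a * pi) = cos (pi / 2)"
      by simp
    from cos_inj_pi[OF _ _ _ _ this] have "pi * (1 - a) * x + a * pi = pi / 2"
      using unit_interval_angle_bounds[OF assms x] pi_gt_zero by linarith
    then have "pi * (1 - a) * x = pi / 2 - a * pi"
      by linarith
    moreover have "pi * (1 - a) \<noteq> 0"
      using assms by simp
    ultimately show False
      using elim by (simp add: eq_divide_eq mult.commute)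
  qed
qed

lemma sin_mult_pi_pos:
  fixes a :: real
  assumes "0 < a" "a < 1"
  shows "0 < sin (a * pi)"
  using assms by (intro sin_gt_zero) auto

lemma W_plus_denominator_pos:
  fixes a lam s :: real
  assumes "0 < a" "a < 1" "0 < lam"
  shows "0 < s powr (2 * a) - 2 * lam * s powr a * cos (a * pi) + lam\<^sup>2"
proof -
  have sq: "s powr (2 * a) = (s powr a)\<^sup>2"
    by (simp only: power2_eq_square mult_2 powr_add)
  show ?thesis
    unfolding sq by (rule sq_sub_cos_add_sq_pos) (use sin_mult_pi_pos[OF assms(1,2)] assms in auto)
qed

lemma W_plus_nonneg:
  assumes "0 < a" "a < 1" "0 < lam"
  shows "0 \<le> W_plus a lam s"
proof -
  have "0 < C_const a"
    using assms by (simp add: C_const_def)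
  with sin_mult_pi_pos[OF assms(1,2)] show ?thesis
    unfolding W_plus_def using W_plus_denominator_pos[OF assms, of s] assms
    by (intro mult_nonneg_nonneg divide_nonneg_nonneg) auto
qed

lemma isCont_W_plus:
  assumes "0 < a" "a < 1" "0 < lam" "0 < s"
  shows "isCont (W_plus a lam) s"
  unfolding W_plus_def[abs_def]
  using W_plus_denominator_pos[OF assms(1-3), of s] assms
  by (intro continuous_intros) auto

definition W_plus_quantile :: "real \<Rightarrow> real \<Rightarrow> real \<Rightarrow> real" where
  "W_plus_quantile a lam y =
     (lam * sin (pi * (1 - a) * y) / sin (pi * (1 - a) * y + a * pi)) powr (1 / a)"

lemma W_plus_quantile_measurable [measurable]: "W_plus_quantile a lam \<in> borel_measurable borel"
  unfolding W_plus_quantile_def[abs_def] by measurable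

lemma W_plus_quantile_pos:
  assumes "0 < a" "a < 1" "0 < lam" "0 < y" "y < 1"
  shows "0 < W_plus_quantile a lam y"
  unfolding W_plus_quantile_def using unit_interval_angle_sin_pos[of a y] assms by simp

lemma W_plus_at_quantile:
  assumes "0 < a" "a < 1" "0 < lam" "0 < y" "y < 1"
  shows "W_plus a lam (W_plus_quantile a lam y)
    = a * sin (pi * (1 - a) * y) * sin (pi * (1 - a) * y + a * pi)
      / (pi * (1 - a) * sin (a * pi) * W_plus_quantile a lam y)"
proof -
  define P where "P = sin (pi * (1 - a) * y)"
  define R where "R = sin (pi * (1 - a) * y + a * pi)"
  define S where "S = W_plus_quantile a lam y"
  have PR: "0 < P" "0 < R"
    using unit_interval_angle_sin_pos[OF assms(1,2,4,5)] by (simp_all add: P_def R_def)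
  have S: "0 < S"
    using W_plus_quantile_pos[OF assms] by (simp add: S_def)
  have sa: "0 < sin (a * pi)"
    using sin_mult_pi_pos[OF assms(1,2)] .
  have Sa: "S powr a = lam * P / R"
    using PR assms by (simp add: S_def W_plus_quantile_def P_def R_def powr_powr)
  have S2a: "S powr (2 * a) = (lam * P / R)\<^sup>2"
    unfolding Sa[symmetric] by (simp only: power2_eq_square mult_2 powr_add)
  have law: "P\<^sup>2 - 2 * P * R * cos (a * pi) + R\<^sup>2 = (sin (a * pi))\<^sup>2"
    unfolding P_def R_def by (rule sin_sq_add_law_of_cosines)
  have "S powr (2 * a) - 2 * lam * S powr a * cos (a * pi) + lam\<^sup>2
      = lam\<^sup>2 / R\<^sup>2 * (P\<^sup>2 - 2 * P * R * cos (a * pi) + R\<^sup>2)"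
    unfolding S2a Sa using PR by (simp add: field_simps power2_eq_square)
  then have den: "S powr (2 * a) - 2 * lam * S powr a * cos (a * pi) + lam\<^sup>2
      = lam\<^sup>2 * (sin (a * pi))\<^sup>2 / R\<^sup>2"
    unfolding law by simp
  have Sa1: "S powr (a - 1) = lam * P / R / S"
    using S by (simp add: powr_diff Sa)
  have "W_plus a lam S = 1 / C_const a * lam * (sin (a * pi) / pi)
      * ((lam * P / R) / S / (lam\<^sup>2 * (sin (a * pi))\<^sup>2 / R\<^sup>2))"
    unfolding W_plus_def den Sa1 ..
  also have "\<dots> = a * P * R / (pi * (1 - a) * sin (a * pi) * S)"
    unfolding C_const_def using PR S sa assms by (simp add: field_simps power2_eq_square)
  finally show ?thesis
    by (simp add: P_def R_def S_def)
qed

lemma W_plus_quantile_has_derivative: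
  assumes "0 < a" "a < 1" "0 < lam" "0 < y" "y < 1"
  shows "(W_plus_quantile a lam has_real_derivative 1 / W_plus a lam (W_plus_quantile a lam y)) (at y)"
proof -
  define k where "k = pi * (1 - a)"
  define P where "P = sin (k * y)"
  define R where "R = sin (k * y + a * pi)"
  have PR: "0 < P" "0 < R"
    using unit_interval_angle_sin_pos[OF assms(1,2,4,5)] by (simp_all add: P_def R_def k_def)
  have "R * cos (k * y) - cos (k * y + a * pi) * P = sin (a * pi)"
    using sin_diff[of "k * y + a * pi" "k * y"] by (simp add: P_def R_def)
  then have base: "DERIV (\<lambda>y. lam * sin (k * y) / sin (k * y + a * pi)) y
      :> lam * k * sin (a * pi) / R\<^sup>2"
    using PR unfolding P_def R_def
    by (auto intro!: derivative_eq_intros simp: field_simps power2_eq_square)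
  have "0 < lam * sin (k * y) / sin (k * y + a * pi)"
    using PR assms by (simp add: P_def R_def)
  from DERIV_fun_powr[OF base this, of "1 / a"]
  have "DERIV (\<lambda>y. (lam * sin (k * y) / sin (k * y + a * pi)) powr (1 / a)) y
      :> 1 / a * (lam * P / R) powr (1 / a - 1) * (lam * k * sin (a * pi) / R\<^sup>2)"
    by (simp add: P_def R_def)
  moreover have "W_plus_quantile a lam = (\<lambda>y. (lam * sin (k * y) / sin (k * y + a * pi)) powr (1 / a))"
    by (simp add: fun_eq_iff W_plus_quantile_def k_def)
  ultimately have "DERIV (W_plus_quantile a lam) y
      :> 1 / a * (lam * P / R) powr (1 / a - 1) * (lam * k * sin (a * pi) / R\<^sup>2)"
    by simp
  moreover have "1 / a * (lam * P / R) powr (1 / a - 1) * (lam * k * sin (a * pi) / R\<^sup>2)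
      = 1 / W_plus a lam (W_plus_quantile a lam y)"
  proof -
    define S where "S = W_plus_quantile a lam y"
    have pos: "0 < S" "0 < k" "0 < sin (a * pi)"
      using W_plus_quantile_pos[OF assms] sin_mult_pi_pos[OF assms(1,2)] assms
      by (simp_all add: S_def k_def)
    have "(lam * P / R) powr (1 / a - 1) = S / (lam * P / R)"
      using PR assms by (simp add: powr_diff S_def W_plus_quantile_def P_def R_def k_def)
    then have "1 / a * (lam * P / R) powr (1 / a - 1) * (lam * k * sin (a * pi) / R\<^sup>2)
        = 1 / (a * P * R / (k * sin (a * pi) * S))"
      using PR pos assms by (simp add: field_simps power2_eq_square)
    also have "a * P * R / (k * sin (a * pi) * S) = W_plus a lam S"
      using W_plus_at_quantile[OF assms] by (simp add: S_def P_def R_def k_def)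
    finally show ?thesis
      by (simp add: S_def)
  qed
  ultimately show ?thesis
    by simp
qed

lemma W_plus_quantile_tendsto_0:
  assumes "0 < a" "a < 1" "0 < lam"
  shows "(W_plus_quantile a lam \<longlongrightarrow> 0) (at_right 0)"
proof -
  let ?g = "\<lambda>y. lam * sin (pi * (1 - a) * y) / sin (pi * (1 - a) * y + a * pi)"
  have "(?g \<longlongrightarrow> ?g 0) (at_right 0)"
    using sin_mult_pi_pos[OF assms(1,2)] by (intro tendsto_intros) auto
  moreover have "\<forall>\<^sub>F y in at_right 0. 0 \<le> ?g y"
    unfolding eventually_at_right_field
    using assms unit_interval_angle_sin_pos[of a] by (intro exI[of _ 1]) (auto intro!: less_imp_le)
  ultimately have "((\<lambda>y. ?g y powr (1 / a)) \<longlongrightarrow> 0) (at_right 0)"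
    using assms by (intro tendsto_zero_powrI[OF _ tendsto_const[of "1 / a"]]) simp_all
  then show ?thesis
    unfolding W_plus_quantile_def[abs_def] .
qed

lemma W_plus_quantile_at_top:
  assumes "0 < a" "a < 1" "0 < lam"
  shows "filterlim (W_plus_quantile a lam) at_top (at_left 1)"
proof -
  let ?g = "\<lambda>y. lam * sin (pi * (1 - a) * y) / sin (pi * (1 - a) * y + a * pi)"
  have "sin (pi * (1 - a) * 1) = sin (a * pi)" and "sin (pi * (1 - a) * 1 + a * pi) = 0"
    using sin_pi_minus[of "a * pi"] by (simp_all add: algebra_simps)
  then have num: "((\<lambda>y. lam * sin (pi * (1 - a) * y)) \<longlongrightarrow> lam * sin (a * pi)) (at_left 1)"
    and den: "((\<lambda>y. sin (pi * (1 - a) * y + a * pi)) \<longlongrightarrow> 0) (at_left 1)"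
    by (auto intro!: tendsto_eq_intros)
  have "0 < lam * sin (a * pi)"
    using sin_mult_pi_pos[OF assms(1,2)] assms by simp
  moreover have "\<forall>\<^sub>F y in at_left 1. 0 < sin (pi * (1 - a) * y + a * pi)"
    unfolding eventually_at_left_field
    using assms unit_interval_angle_sin_pos[of a] by (intro exI[of _ 0]) auto
  ultimately have g: "filterlim ?g at_top (at_left 1)"
    by (rule LIM_at_top_divide[OF num _ den])
  have "\<forall>\<^sub>F y in at_left 1. ?g y \<le> W_plus_quantile a lam y"
  proof -
    have "\<forall>\<^sub>F y in at_left 1. 1 \<le> ?g y"
      using g by (simp add: filterlim_at_top)
    then show ?thesis
    proof (rule eventually_mono)
      fix y assume "1 \<le> ?g y"
      then have "?g y = ?g y powr 1"
        using powr_one[of "?g y"] by linarith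
      also have "\<dots> \<le> ?g y powr (1 / a)"
        using \<open>1 \<le> ?g y\<close> assms by (intro powr_mono) auto
      finally show "?g y \<le> W_plus_quantile a lam y"
        by (simp add: W_plus_quantile_def)
    qed
  qed
  then show ?thesis
    using filterlim_at_top_mono[OF g] by blast
qed

lemma W_plus_at_quantile_pos:
  assumes "0 < a" "a < 1" "0 < lam" "0 < y" "y < 1"
  shows "0 < W_plus a lam (W_plus_quantile a lam y)"
  using W_plus_at_quantile[OF assms] W_plus_quantile_pos[OF assms]
    unit_interval_angle_sin_pos[OF assms(1,2,4,5)] sin_mult_pi_pos[OF assms(1,2)] assms
  by simp

lemma isCont_inverse_W_plus_at_quantile:
  assumes "0 < a" "a < 1" "0 < lam" "0 < y" "y < 1"
  shows "isCont (\<lambda>y. 1 / W_plus a lam (W_plus_quantile a lam y)) y"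
proof -
  have "isCont (W_plus_quantile a lam) y"
    using W_plus_quantile_has_derivative[OF assms] by (rule DERIV_isCont)
  moreover have "isCont (W_plus a lam) (W_plus_quantile a lam y)"
    using isCont_W_plus[OF assms(1-3) W_plus_quantile_pos[OF assms]] .
  ultimately have "isCont (\<lambda>y. W_plus a lam (W_plus_quantile a lam y)) y"
    by (rule isCont_o2)
  then show ?thesis
    using W_plus_at_quantile_pos[OF assms] by simp
qed

lemma set_integrable_exp_neg_quantile:
  assumes "0 \<le> t"
  shows "set_integrable lborel {0<..<1::real} (\<lambda>y. exp (- W_plus_quantile a lam y * t))"
proof (rule set_integrable_bound[where f = "\<lambda>_. 1::real"])
  show "set_integrable lborel {0<..<1::real} (\<lambda>_. 1::real)"
    unfolding set_integrable_def by (simp add: integrable_real_indicator)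
  show "set_borel_measurable lborel {0<..<1::real} (\<lambda>y. exp (- W_plus_quantile a lam y * t))"
    unfolding set_borel_measurable_def by measurable
  show "AE y in lborel. y \<in> {0<..<1} \<longrightarrow> norm (exp (- W_plus_quantile a lam y * t)) \<le> norm (1::real)"
    using assms by (auto simp: W_plus_quantile_def intro!: AE_I2 mult_nonneg_nonneg)
qed

lemma laplace_W_plus_eq_quantile_integral:
  assumes "0 < a" "a < 1" "0 < lam" "0 \<le> t"
  shows "(LBINT s:{0<..}. W_plus a lam s * exp (- s * t))
    = (LBINT y:{0<..<1}. exp (- W_plus_quantile a lam y * t))"
proof -
  let ?f = "\<lambda>s. W_plus a lam s * exp (- s * t)"
  let ?g = "W_plus_quantile a lam"
  let ?g' = "\<lambda>y. 1 / W_plus a lam (?g y)"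
  have f_cont: "isCont ?f s" if "0 < s" for s
    using isCont_W_plus[OF assms(1-3) that] by (intro isCont_mult) (auto intro!: continuous_intros)
  have "set_integrable lborel {0<..<1::real} (\<lambda>y. ?f (?g y) * ?g' y)
      = set_integrable lborel {0<..<1::real} (\<lambda>y. exp (- ?g y * t))"
    by (rule set_integrable_cong) (auto dest: W_plus_at_quantile_pos[OF assms(1-3)])
  then have integrable: "set_integrable lborel (einterval 0 1) (\<lambda>y. ?f (?g y) * ?g' y)"
    using set_integrable_exp_neg_quantile[OF assms(4)] by (simp add: zero_ereal_def one_ereal_def)
  have "(LBINT s=0..\<infinity>. ?f s) = (LBINT y=0..1. ?f (?g y) * ?g' y)"
  proof (rule interval_integral_substitution_nonneg(2))
    show "((ereal \<circ> ?g \<circ> real_of_ereal) \<longlongrightarrow> 0) (at_right 0)"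
      using W_plus_quantile_tendsto_0[OF assms(1-3)] by (simp add: zero_ereal_def ereal_tendsto_simps)
    show "((ereal \<circ> ?g \<circ> real_of_ereal) \<longlongrightarrow> \<infinity>) (at_left 1)"
      using W_plus_quantile_at_top[OF assms(1-3)] by (simp add: one_ereal_def ereal_tendsto_simps)
    show "\<And>y. 0 < ereal y \<Longrightarrow> ereal y < 1 \<Longrightarrow> DERIV ?g y :> ?g' y"
      using W_plus_quantile_has_derivative[OF assms(1-3)] by (simp add: zero_ereal_def one_ereal_def)
    show "\<And>y. 0 < ereal y \<Longrightarrow> ereal y < 1 \<Longrightarrow> isCont ?f (?g y)"
      using f_cont W_plus_quantile_pos[OF assms(1-3)] by (simp add: zero_ereal_def one_ereal_def)
    show "\<And>y. 0 < ereal y \<Longrightarrow> ereal y < 1 \<Longrightarrow> isCont ?g' y"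
      using isCont_inverse_W_plus_at_quantile[OF assms(1-3)] by (simp add: zero_ereal_def one_ereal_def)
    show "\<And>y. 0 < ereal y \<Longrightarrow> ereal y < 1 \<Longrightarrow> 0 \<le> ?f (?g y)"
      using W_plus_nonneg[OF assms(1-3)] by simp
    show "\<And>y. 0 \<le> ereal y \<Longrightarrow> ereal y \<le> 1 \<Longrightarrow> 0 \<le> ?g' y"
      using W_plus_nonneg[OF assms(1-3)] by simp
  qed (use integrable in simp_all)
  also have "\<dots> = (LBINT y:{0<..<1}. exp (- ?g y * t))"
    unfolding interval_lebesgue_integral_def
    by (simp add: zero_ereal_def one_ereal_def, intro set_lebesgue_integral_cong)
      (auto dest: W_plus_at_quantile_pos[OF assms(1-3)])
  finally show ?thesis
    using interval_integral_to_infinity_eq[of lborel 0 ?f] by (simp add: zero_ereal_def)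
qed

definition tau_scale :: "real \<Rightarrow> real \<Rightarrow> real \<Rightarrow> real" where
  "tau_scale a lam x1 =
     (let v = C_const a * x1 in
      (1 / lam) powr (1 / a) *
        ((sin (a * pi * (1 + 2 * v)) - sin (a * pi)) / sin (2 * a * pi * (1 + v))) powr (1 / a))"

lemma tau_fun_eq_scaled_neg_ln: "tau_fun a lam x1 x2 = - (tau_scale a lam x1 * ln x2)"
  unfolding tau_fun_def tau_scale_def Let_def by simp

lemma tau_scale_measurable [measurable]: "tau_scale a lam \<in> borel_measurable borel"
  unfolding tau_scale_def[abs_def] Let_def by measurable

text \<open>The quotient inside tau_scale is (sin(theta + phi) - sin(theta - phi)) / sin(2 theta) with
  phi = pi (1 - a) x and theta = a pi + phi. It reduces to sin phi / sin theta only where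
  cos theta is nonzero; at the single x where cos theta vanishes, division by zero makes
  tau_scale 0, hence the almost-everywhere statements below.\<close>

lemma tau_scale_eq_inverse_quantile:
  assumes "0 < a" "a < 1" "0 < lam" "0 < x" "x < 1"
    and "cos (pi * (1 - a) * x + a * pi) \<noteq> 0"
  shows "tau_scale a lam x = 1 / W_plus_quantile a lam (1 - x)"
proof -
  define ph where "ph = pi * (1 - a) * x"
  define th where "th = a * pi + ph"
  have cos_th: "cos th \<noteq> 0"
    using assms(6) by (simp add: th_def ph_def add.commute)
  have pos: "0 < sin ph" "0 < sin th"
    using unit_interval_angle_sin_pos[OF assms(1,2,4,5)] by (simp_all add: ph_def th_def add.commute)
  have sum: "a * pi * (1 + 2 * (C_const a * x)) = th + ph"
    and double: "2 * a * pi * (1 + C_const a * x) = 2 * th"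
    using assms by (simp_all add: th_def ph_def C_const_def field_simps)
  have "sin (a * pi * (1 + 2 * (C_const a * x))) - sin (a * pi) = sin (th + ph) - sin (th - ph)"
    unfolding sum by (simp add: th_def)
  also have "\<dots> = 2 * cos th * sin ph"
    by (simp add: sin_add sin_diff)
  finally have numerator: "sin (a * pi * (1 + 2 * (C_const a * x))) - sin (a * pi) = 2 * cos th * sin ph" .
  have "sin (2 * a * pi * (1 + C_const a * x)) = 2 * sin th * cos th"
    unfolding double by (rule sin_double)
  with numerator have quotient: "(sin (a * pi * (1 + 2 * (C_const a * x))) - sin (a * pi))
      / sin (2 * a * pi * (1 + C_const a * x)) = sin ph / sin th"
    using cos_th by simp
  have "tau_scale a lam x = (sin ph / (lam * sin th)) powr (1 / a)"
    unfolding tau_scale_def Let_def quotient using pos assms by (simp add: powr_mult[symmetric])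
  moreover have "W_plus_quantile a lam (1 - x) = (lam * sin th / sin ph) powr (1 / a)"
  proof -
    have "pi * (1 - a) * (1 - x) = pi - th"
      by (simp add: th_def ph_def algebra_simps)
    then have "sin (pi * (1 - a) * (1 - x)) = sin th"
      by simp
    moreover have "pi * (1 - a) * (1 - x) + a * pi = pi - ph"
      by (simp add: th_def ph_def algebra_simps)
    then have "sin (pi * (1 - a) * (1 - x) + a * pi) = sin ph"
      by simp
    ultimately show ?thesis
      unfolding W_plus_quantile_def by simp
  qed
  ultimately show ?thesis
    using pos assms by (simp add: powr_divide)
qed

lemma AE_tau_scale_eq_inverse_quantile:
  assumes "0 < a" "a < 1" "0 < lam"
  shows "AE x in lborel. 0 < x \<longrightarrow> x < 1 \<longrightarrow> tau_scale a lam x = 1 / W_plus_quantile a lam (1 - x)"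
  using AE_cos_angle_ne_zero[OF assms(1,2)]
  by eventually_elim (use tau_scale_eq_inverse_quantile[OF assms] in auto)

lemma AE_tau_fun_pos:
  assumes "0 < a" "a < 1" "0 < lam"
    and "distributed M lborel u1 (\<lambda>x. indicator {0<..<1} x)"
    and "distributed M lborel u2 (\<lambda>x. indicator {0<..<1} x)"
  shows "AE x in M. 0 < tau_fun a lam (u1 x) (u2 x)"
proof -
  have "AE x in M. 0 < u1 x \<and> u1 x < 1
      \<and> tau_scale a lam (u1 x) = 1 / W_plus_quantile a lam (1 - u1 x)"
    by (rule AE_distributedD[OF assms(4)],
        rule eventually_mono[OF AE_tau_scale_eq_inverse_quantile[OF assms(1-3)]])
      (auto simp: indicator_def)
  moreover have "AE x in M. 0 < u2 x \<and> u2 x < 1"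
    by (intro AE_distributedD[OF assms(5)] AE_I2) (simp add: indicator_def)
  ultimately show ?thesis
  proof eventually_elim
    case (elim x)
    then have "0 < tau_scale a lam (u1 x)"
      using W_plus_quantile_pos[OF assms(1-3), of "1 - u1 x"] by simp
    moreover have "ln (u2 x) < 0"
      using elim by simp
    ultimately show ?case
      by (simp add: tau_fun_eq_scaled_neg_ln mult_pos_neg)
  qed
qed

lemma tau_fun_survival:
  fixes M :: "'m measure" and u1 u2 :: "'m \<Rightarrow> real"
  assumes "0 < a" "a < 1" "0 < lam"
    and "prob_space M"
    and "distributed M lborel u1 (\<lambda>x. indicator {0<..<1} x)"
    and "distributed M lborel u2 (\<lambda>x. indicator {0<..<1} x)"
    and "prob_space.indep_var M borel u1 borel u2"
    and "0 \<le> t"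
  shows "measure M {x \<in> space M. t < tau_fun a lam (u1 x) (u2 x)}
    = (LBINT s:{0<..}. W_plus a lam s * exp (- s * t))"
proof -
  have "measure M {x \<in> space M. t < tau_fun a lam (u1 x) (u2 x)}
      = (LBINT x:{0<..<1}. if 0 < tau_scale a lam x then exp (- t / tau_scale a lam x) else 0)"
    unfolding tau_fun_eq_scaled_neg_ln
    by (rule measure_neg_ln_scaled_gt[OF assms(4-7) tau_scale_measurable _ assms(8)])
      (simp add: tau_scale_def Let_def)
  also have "\<dots> = (LBINT x:{0<..<1}. exp (- W_plus_quantile a lam (1 - x) * t))"
    using AE_tau_scale_eq_inverse_quantile[OF assms(1-3)] W_plus_quantile_pos[OF assms(1-3)]
    by (intro set_lebesgue_integral_cong_AE) (auto elim!: eventually_mono)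
  also have "\<dots> = (LBINT y:{0<..<1}. exp (- W_plus_quantile a lam y * t))"
    by (rule set_integral_reflect_unit_interval[where h = "\<lambda>y. exp (- W_plus_quantile a lam y * t)"])
  also have "\<dots> = (LBINT s:{0<..}. W_plus a lam s * exp (- s * t))"
    by (rule laplace_W_plus_eq_quantile_integral[OF assms(1-3,8), symmetric])
  finally show ?thesis .
qed

theorem mainTheorem4:
  fixes a lam :: real and M :: "'m measure" and u1 u2 :: "'m \<Rightarrow> real"
  assumes "0 < a" and "a < 1" and "0 < lam"
    and "prob_space M"
    and "distributed M lborel u1 (\<lambda>x. indicator {0<..<1} x)"
    and "distributed M lborel u2 (\<lambda>x. indicator {0<..<1} x)"
    and "prob_space.indep_var M borel u1 borel u2"
  shows "(AE x in M. tau_fun a lam (u1 x) (u2 x) > 0)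
       \<and> (\<forall>t::real. t \<ge> 0 \<longrightarrow>
            measure M {x \<in> space M. tau_fun a lam (u1 x) (u2 x) > t}
              = (LBINT s:{0<..}. W_plus a lam s * exp (- s * t)))"
  using AE_tau_fun_pos[OF assms(1-3,5,6)] tau_fun_survival[OF assms] by blast

end
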